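(* Let $\theta\in\mathbb{R}$ with $\sin\theta\neq 0$, and put $c=\cos\theta$, $s=\sin\theta$. Let $\mathcal{H}$ be a $3$-dimensional complex Hilbert space with orthonormal basis $\{|E\rangle,|\tau_0\rangle,|\tau_1\rangle\}$, and let $U$ be a unitary operator on $\mathcal{H}$ satisfying the four conditions $$\langle E|U|\tau_0\rangle=0,\qquad c\,\langle E|U|E\rangle+s\,\langle E|U|\tau_1\rangle=0,$$ $$\langle \tau_0|U|\tau_1\rangle=0,\qquad c\,\langle \tau_0|U|E\rangle+s\,\langle \tau_0|U|\tau_0\rangle=0 .$$ Define $P^{(0)}_{\mathrm{cf}}:=|c\,\langle E|U|E\rangle|^2$ and $P^{(1)}_{\mathrm{cf}}:=|c\,\langle \tau_0|U|E\rangle|^2$. Then there is no such unitary $U$ for which both $P^{(0)}_{\mathrm{cf}}>0$ and $P^{(1)}_{\mathrm{cf}}>0$.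
   Context: Physical interpretation (not needed for the mathematics): this is a "counterfactual clock" with two distinguishable times $\tau_0,\tau_1$ and no ancilla states. Initially the state is $|E\rangle$; a unitary maps it to $c|E\rangle+s|\psi\rangle$, the clock dynamics $U(t)$ fixes $|E\rangle$ and maps $|\psi\rangle$ to $|\tau_j\rangle$ at time $\tau_j$, then $U$ is applied and one measures. The four displayed conditions are the requirements that outcome $E$ can only arise from the stationary branch and certifies elapsed time $\tau_0$, and that outcome $\tau_0$ can only arise from the stationary branch and certifies elapsed time $\tau_1$; $P^{(0)}_{\mathrm{cf}}$ and $P^{(1)}_{\mathrm{cf}}$ are the probabilities of these two counterfactual outcomes. *)

theory Defs
  imports "HOL-Analysis.Analysis"
begin

text \<open>Operators on the 3-dimensional Hilbert space are represented by their matrices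
  in the orthonormal basis E = 1, tau0 = 2, tau1 = 3 (indices of type 3);
  the matrix element U $ a $ b is the amplitude (a|U|b).\<close>

definition cadjoint :: "complex^'n^'n \<Rightarrow> complex^'n^'n" where
  "cadjoint U = (\<chi> i j. cnj (U $ j $ i))"

definition cunitary :: "complex^'n^'n \<Rightarrow> bool" where
  "cunitary U \<longleftrightarrow> U ** cadjoint U = mat 1 \<and> cadjoint U ** U = mat 1"

end

(* The rows E and tau0 of a unitary matrix are orthogonal. Since (E|U|tau0) = 0 and
   (tau0|U|tau1) = 0, their inner product reduces to the single term
   (E|U|E) * cnj (tau0|U|E), so one of these two amplitudes vanishes and with it one of
   the two counterfactual probabilities. *)
theory Submission
  imports Defs
begin

lemma cunitary_rows_orthogonal:
  fixes U :: "complex^'n^'n"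
  assumes "cunitary U" and "i \<noteq> j"
  shows "(\<Sum>k\<in>UNIV. U $ i $ k * cnj (U $ j $ k)) = 0"
proof -
  have "(U ** cadjoint U) $ i $ j = 0"
    using assms unfolding cunitary_def by (simp add: mat_def)
  then show ?thesis
    by (simp add: matrix_matrix_mult_def cadjoint_def)
qed

lemma cunitary3_amplitude_vanishes:
  fixes U :: "complex^3^3"
  assumes "cunitary U" and "U $ 1 $ 2 = 0" and "U $ 2 $ 3 = 0"
  shows "U $ 1 $ 1 = 0 \<or> U $ 2 $ 1 = 0"
proof -
  have "U $ 1 $ 1 * cnj (U $ 2 $ 1) = 0"
    using cunitary_rows_orthogonal[OF assms(1), of 1 2] assms(2,3) by (simp add: sum_3)
  then show ?thesis by simp
qed

theorem proposition1:
  fixes \<theta> :: real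
  assumes "sin \<theta> \<noteq> 0"
  shows "\<not> (\<exists>U :: complex^3^3.
            cunitary U \<and>
            U $ 1 $ 2 = 0 \<and>
            complex_of_real (cos \<theta>) * U $ 1 $ 1 + complex_of_real (sin \<theta>) * U $ 1 $ 3 = 0 \<and>
            U $ 2 $ 3 = 0 \<and>
            complex_of_real (cos \<theta>) * U $ 2 $ 1 + complex_of_real (sin \<theta>) * U $ 2 $ 2 = 0 \<and>
            (cmod (complex_of_real (cos \<theta>) * U $ 1 $ 1))\<^sup>2 > 0 \<and>
            (cmod (complex_of_real (cos \<theta>) * U $ 2 $ 1))\<^sup>2 > 0)"
  using cunitary3_amplitude_vanishes by fastforce

end
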